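(* Let $Q$ be a graph consisting of a single vertex $v$ and a single loop edge, and let $X$ be a locally standard $T^m$-pseudomanifold over $Q$ (i.e. with $l=0$, $n=1$ and orbit space $Q$, the vertex being the $0$-stratum and the open loop the $1$-stratum), with orbit projection $\pi:X\to Q$. Then there exists a continuous section $s:Q\to X$ of $\pi$, i.e. $\pi\circ s=\mathrm{id}_Q$.
   Context: Notation: $U(1)=\{z\in\mathbb C:|z|=1\}$, $T^m=U(1)^m$, $\mathbb C^\times=\mathbb C\setminus\{0\}$, open cone $\mathring c(L)=L\times[0,1)/(L\times\{0\})$ ($\mathring c(\emptyset)$ a point). A topological stratified pseudomanifold is a Hausdorff space $Q$ with closed filtration $Q=Q_{l+n}\supsetneq\cdots\supsetneq Q_l\supsetneq\emptyset$ whose strata (components of $Q_i\setminus Q_{i-1}$) are $i$-manifolds, with $\mathring Q=Q_{l+n}\setminus Q_{l+n-1}$ dense, and each point $p$ of an $(l+i)$-stratum having a filtration-preserving neighborhood $O\times\mathring c(L_p)$, $O\subset\mathbb R^{l+i}$ contractible open, $L_p$ a compact $(n-i-1)$-dimensional topological stratified pseudomanifold (the link). Locally standard $T^m$-pseudomanifold $X$ (dimension $l+m+n$, $l\ge0$, $m\ge n\ge0$): a second-countable compact Hausdorff space with effective continuous $T^m$-action with subtorus isotropy groups, filtered by $X_{l+2i+(m-n)}=X_{l+2i+1+(m-n)}=\{x:\dim T^mx\le i+m-n\}$ ($0\le i\le n$), which is a topological stratified pseudomanifold with no orbits of dimension $<m-n$ and with free orbits if $l+n\ne0$, and inductively: if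 $l+n=0$, $X$ is a finite disjoint union of copies of $T^m$; otherwise each $x\in X_{l+2i+(m-n)}\setminus X_{l+2(i-1)+(m-n)}$ has an invariant open neighborhood weakly equivariantly homeomorphic to $O\times(\Omega\times U(1)^{m-n})\times\mathring c(L_x)$ with $O\subset\mathbb R^l$ contractible open, $\Omega\subset(\mathbb C^\times)^i$ invariant open, $L_x$ a compact $(2n-2i-1)$-dimensional locally standard $T_x$-pseudomanifold ($T_x\cong T^{n-i}$ the isotropy group), $T^m\cong U(1)^{i+m-n}\times T_x$ acting freely on the middle factor and via $L_x$ on the cone. The orbit space $Q=X/T^m$ with filtration $Q_{l+i}=X_{l+2i+(m-n)}/T^m$ is a topological stratified pseudomanifold of dimension $l+n$. When $l=0,n=1$, $Q$ is a finite graph (vertices $=$ $0$-strata, open edges $=$ $1$-strata), and $X$ is called a locally standard $T^m$-pseudomanifold over a graph; isotropy is a $1$-dimensional subtorus over vertices and trivial over open edges. *)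

theory Defs
  imports "HOL-Analysis.Analysis"
begin

definition torus :: "nat \<Rightarrow> (nat \<Rightarrow> complex) set" where
  "torus m = {t. (\<forall>i<m. cmod (t i) = 1) \<and> (\<forall>i\<ge>m. t i = 1)}"

definition cfun_top :: "(nat \<Rightarrow> complex) topology" where
  "cfun_top = product_topology (\<lambda>_. euclidean) UNIV"

definition torus_top :: "nat \<Rightarrow> (nat \<Rightarrow> complex) topology" where
  "torus_top m = subtopology cfun_top (torus m)"

definition tmult :: "(nat \<Rightarrow> complex) \<Rightarrow> (nat \<Rightarrow> complex) \<Rightarrow> (nat \<Rightarrow> complex)" where
  "tmult s t = (\<lambda>i. s i * t i)"

definition tone :: "nat \<Rightarrow> complex" where
  "tone = (\<lambda>_. 1)"

text \<open>Continuous automorphisms of T^m (used for weak equivariance).\<close>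
definition torus_aut :: "nat \<Rightarrow> ((nat \<Rightarrow> complex) \<Rightarrow> (nat \<Rightarrow> complex)) \<Rightarrow> bool" where
  "torus_aut m \<phi> \<longleftrightarrow> homeomorphic_map (torus_top m) (torus_top m) \<phi> \<and>
     (\<forall>s\<in>torus m. \<forall>t\<in>torus m. \<phi> (tmult s t) = tmult (\<phi> s) (\<phi> t))"

definition isotropy :: "nat \<Rightarrow> ((nat \<Rightarrow> complex) \<Rightarrow> 'a \<Rightarrow> 'a) \<Rightarrow> 'a \<Rightarrow> (nat \<Rightarrow> complex) set" where
  "isotropy m act x = {t \<in> torus m. act t x = x}"

text \<open>Local model over an open edge (l=0, n=1, i=1):
  Omega x U(1)^(m-1), Omega an open U(1)-invariant subset of C^x.
  Coordinate 0 carries Omega, coordinates 1..m-1 carry U(1)^(m-1);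
  T^m acts by coordinatewise multiplication (freely).\<close>
definition free_model :: "nat \<Rightarrow> complex set \<Rightarrow> (nat \<Rightarrow> complex) set" where
  "free_model m \<Omega> = {p. p 0 \<in> \<Omega> \<and> (\<forall>i. 1 \<le> i \<and> i < m \<longrightarrow> cmod (p i) = 1) \<and> (\<forall>i\<ge>m. p i = 1)}"

text \<open>Local model over a vertex (l=0, n=1, i=0):
  U(1)^(m-1) x open cone on the link L_x, where L_x is a finite disjoint union
  of k circles (a 1-dimensional locally standard T_x-pseudomanifold with T_x = U(1)).
  The open cone on k circles is realised in C^k as the vectors with at most one
  nonzero coordinate, all coordinates of modulus < 1 (apex = 0).
  Coordinate 0 of T^m acts on the cone by scalar multiplication
  (this is T_x), coordinates 1..m-1 act on U(1)^(m-1).\<close>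
definition vertex_model :: "nat \<Rightarrow> nat \<Rightarrow> ((nat \<Rightarrow> complex) \<times> (nat \<Rightarrow> complex)) set" where
  "vertex_model m k = {(u, w). u 0 = 1 \<and> (\<forall>i. 1 \<le> i \<and> i < m \<longrightarrow> cmod (u i) = 1) \<and> (\<forall>i\<ge>m. u i = 1) \<and>
      (\<forall>j\<ge>k. w j = 0) \<and> (\<forall>j. cmod (w j) < 1) \<and> (\<forall>j j'. w j \<noteq> 0 \<and> w j' \<noteq> 0 \<longrightarrow> j = j')}"

definition vertex_act :: "(nat \<Rightarrow> complex) \<Rightarrow> (nat \<Rightarrow> complex) \<times> (nat \<Rightarrow> complex) \<Rightarrow> (nat \<Rightarrow> complex) \<times> (nat \<Rightarrow> complex)" where
  "vertex_act t p = ((\<lambda>i. if i = 0 then 1 else t i * fst p i), (\<lambda>j. t 0 * snd p j))"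

definition free_chart :: "nat \<Rightarrow> 'a topology \<Rightarrow> ((nat \<Rightarrow> complex) \<Rightarrow> 'a \<Rightarrow> 'a) \<Rightarrow> 'a \<Rightarrow> bool" where
  "free_chart m X act x \<longleftrightarrow>
     (\<exists>U \<Omega> h \<phi>. openin X U \<and> x \<in> U \<and> (\<forall>t\<in>torus m. \<forall>y\<in>U. act t y \<in> U) \<and>
        open \<Omega> \<and> 0 \<notin> \<Omega> \<and> (\<forall>c z. cmod c = 1 \<longrightarrow> z \<in> \<Omega> \<longrightarrow> c * z \<in> \<Omega>) \<and>
        torus_aut m \<phi> \<and>
        homeomorphic_map (subtopology X U) (subtopology cfun_top (free_model m \<Omega>)) h \<and>
        (\<forall>t\<in>torus m. \<forall>y\<in>U. h (act t y) = tmult (\<phi> t) (h y)))"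

definition vertex_chart :: "nat \<Rightarrow> 'a topology \<Rightarrow> ((nat \<Rightarrow> complex) \<Rightarrow> 'a \<Rightarrow> 'a) \<Rightarrow> 'a \<Rightarrow> bool" where
  "vertex_chart m X act x \<longleftrightarrow>
     (\<exists>U k h \<phi>. openin X U \<and> x \<in> U \<and> (\<forall>t\<in>torus m. \<forall>y\<in>U. act t y \<in> U) \<and>
        torus_aut m \<phi> \<and>
        homeomorphic_map (subtopology X U)
          (subtopology (prod_topology cfun_top cfun_top) (vertex_model m k)) h \<and>
        (\<forall>t\<in>torus m. \<forall>y\<in>U. h (act t y) = vertex_act (\<phi> t) (h y)) \<and>
        snd (h x) = (\<lambda>_. 0))"

definition loc_std_over_graph :: "nat \<Rightarrow> 'a topology \<Rightarrow> ((nat \<Rightarrow> complex) \<Rightarrow> 'a \<Rightarrow> 'a) \<Rightarrow> bool" where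
  "loc_std_over_graph m X act \<longleftrightarrow>
     1 \<le> m \<and> compact_space X \<and> Hausdorff_space X \<and> second_countable X \<and>
     continuous_map (prod_topology (torus_top m) X) X (\<lambda>(t, x). act t x) \<and>
     (\<forall>x\<in>topspace X. act tone x = x) \<and>
     (\<forall>s\<in>torus m. \<forall>t\<in>torus m. \<forall>x\<in>topspace X. act (tmult s t) x = act s (act t x)) \<and>
     (\<forall>t\<in>torus m. (\<forall>x\<in>topspace X. act t x = x) \<longrightarrow> t = tone) \<and>
     (\<exists>x\<in>topspace X. isotropy m act x = {tone}) \<and>
     (\<forall>x\<in>topspace X. free_chart m X act x \<or> vertex_chart m X act x)"

end

theory Submission
  imports Defs
begin

text \<open>Over every point of the orbit space there is a local section: in a chart the orbit map
  becomes the quotient of a model by a torus acting coordinatewise, and making the relevant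
  coordinate a nonnegative real picks one point of each orbit continuously. Gluing such sections
  along a Lebesgue subdivision, with torus translations to match endpoints, lifts the loop that
  runs once around the circle to a path \<sigma> in X with \<sigma>(1) = h \<sigma>(0). As the torus is path
  connected, translating \<sigma> by a path from 1 to h\<inverse> closes the lift up, and a closed lift of
  that loop is a section over the circle.\<close>

lemma topspace_torus_top [simp]: "topspace (torus_top m) = torus m"
  by (simp add: torus_top_def cfun_top_def)

lemma topspace_cfun_top [simp]: "topspace cfun_top = UNIV"
  by (simp add: cfun_top_def)

lemma tone_in_torus [simp]: "tone \<in> torus m"
  by (simp add: torus_def tone_def)

lemma torus_nonzero:
  assumes "t \<in> torus m"
  shows "t i \<noteq> 0"
proof (cases "i < m")
  case True
  with assms have "cmod (t i) = 1"
    by (simp add: torus_def)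
  then show ?thesis
    by auto
next
  case False
  with assms show ?thesis
    by (simp add: torus_def)
qed

lemma torus_inverse:
  assumes "t \<in> torus m"
  shows "(\<lambda>i. inverse (t i)) \<in> torus m" and "tmult (\<lambda>i. inverse (t i)) t = tone"
proof -
  show "(\<lambda>i. inverse (t i)) \<in> torus m"
    using assms by (simp add: torus_def norm_inverse)
  show "tmult (\<lambda>i. inverse (t i)) t = tone"
    using torus_nonzero[OF assms] by (simp add: tmult_def tone_def)
qed

lemma torus_aut_image:
  assumes "torus_aut m \<phi>"
  shows "\<phi> ` torus m = torus m"
  using assms homeomorphic_imp_surjective_map[of "torus_top m" "torus_top m" \<phi>]
  by (simp add: torus_aut_def)

lemma continuous_map_cfun_top_iff:
  "continuous_map Y cfun_top f \<longleftrightarrow> (\<forall>i. continuous_map Y euclidean (\<lambda>y. f y i))"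
  by (simp add: cfun_top_def continuous_map_componentwise_UNIV)

lemma torus_path_from_tone:
  assumes "t \<in> torus m"
  obtains \<gamma> where "continuous_map (top_of_set {0..1::real}) (torus_top m) \<gamma>"
    "\<gamma> 0 = tone" "\<gamma> 1 = t"
proof -
  define \<gamma> where "\<gamma> = (\<lambda>r::real. \<lambda>i. if i < m then cis (r * Arg (t i)) else 1)"
  have "continuous_map (top_of_set {0..1}) cfun_top \<gamma>"
    unfolding continuous_map_cfun_top_iff
  proof
    fix i
    show "continuous_map (top_of_set {0..1}) euclidean (\<lambda>r. \<gamma> r i)"
      by (cases "i < m")
        (simp_all add: \<gamma>_def continuous_on_cis continuous_on_mult continuous_on_const continuous_on_id)
  qed
  then have "continuous_map (top_of_set {0..1}) (torus_top m) \<gamma>"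
    unfolding torus_top_def by (rule continuous_map_into_subtopology) (simp add: \<gamma>_def torus_def)
  moreover have "\<gamma> 0 = tone"
    by (simp add: \<gamma>_def tone_def fun_eq_iff)
  moreover have "\<gamma> 1 = t"
  proof
    fix i
    show "\<gamma> 1 i = t i"
    proof (cases "i < m")
      case True
      then have "cmod (t i) = 1"
        using assms by (simp add: torus_def)
      then have "sgn (t i) = t i"
        by (simp add: sgn_eq)
      then have "cis (Arg (t i)) = t i"
        using Arg_correct[OF torus_nonzero[OF assms]] by metis
      with True show ?thesis
        by (simp add: \<gamma>_def)
    next
      case False
      then show ?thesis
        using assms by (simp add: \<gamma>_def torus_def)
    qed
  qed
  ultimately show ?thesis
    by (rule that)
qed

lemma continuous_map_glue_intervals:
  fixes f g :: "real \<Rightarrow> 'a"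
  assumes f: "continuous_map (top_of_set {c..a}) X f"
    and g: "continuous_map (top_of_set {a..b}) X g"
    and "f a = g a" "c \<le> a" "a \<le> b"
  shows "continuous_map (top_of_set {c..b}) X (\<lambda>t. if t \<le> a then f t else g t)"
proof -
  have "continuous_map (top_of_set {c..b}) X (\<lambda>t. if id t \<le> (\<lambda>_. a) t then f t else g t)"
  proof (rule continuous_map_cases_le)
    have "subtopology (top_of_set {c..b}) {t \<in> topspace (top_of_set {c..b}). id t \<le> a} =
        top_of_set {c..a}"
      using assms(4,5) by (simp add: subtopology_subtopology) (rule arg_cong[where f = top_of_set], auto)
    with f show "continuous_map (subtopology (top_of_set {c..b})
        {t \<in> topspace (top_of_set {c..b}). id t \<le> a}) X f"
      by simp
    have "subtopology (top_of_set {c..b}) {t \<in> topspace (top_of_set {c..b}). a \<le> id t} =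
        top_of_set {a..b}"
      using assms(4,5) by (simp add: subtopology_subtopology) (rule arg_cong[where f = top_of_set], auto)
    with g show "continuous_map (subtopology (top_of_set {c..b})
        {t \<in> topspace (top_of_set {c..b}). a \<le> id t}) X g"
      by simp
  qed (use assms(3) in auto)
  then show ?thesis
    by simp
qed

lemma interval_subdivision_subordinate:
  assumes p: "continuous_map (top_of_set {0..1::real}) Q p"
    and cover: "\<And>t. t \<in> {0..1} \<Longrightarrow> \<exists>V\<in>\<V>. openin Q V \<and> p t \<in> V"
  obtains N :: nat
  where "0 < N" "\<And>k. k < N \<Longrightarrow> \<exists>V\<in>\<V>. p ` {real k / N..real (Suc k) / N} \<subseteq> V"
proof -
  define \<C> where "\<C> = {W. open W \<and> (\<exists>V\<in>\<V>. \<forall>r\<in>{0..1} \<inter> W. p r \<in> V)}"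
  have \<C>_covers: "\<exists>W\<in>\<C>. t \<in> W" if t: "t \<in> {0..1}" for t
  proof -
    obtain V where V: "V \<in> \<V>" "openin Q V" "p t \<in> V"
      using cover[OF t] by blast
    have "openin (top_of_set {0..1}) {r \<in> {0..1}. p r \<in> V}"
      using openin_continuous_map_preimage[OF p V(2)] by simp
    then obtain W where W: "open W" "{r \<in> {0..1}. p r \<in> V} = {0..1} \<inter> W"
      unfolding openin_open by auto
    then have "W \<in> \<C>"
      unfolding \<C>_def using V(1) by blast
    moreover have "t \<in> W"
      using W(2) t V(3) by blast
    ultimately show ?thesis
      by blast
  qed
  then have "{0..1} \<subseteq> \<Union>\<C>"
    by blast
  moreover have "\<C> \<noteq> {}"
    using \<C>_covers[of 0] by auto
  moreover have "\<And>W. W \<in> \<C> \<Longrightarrow> open W"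
    unfolding \<C>_def by blast
  ultimately obtain \<delta> where \<delta>: "0 < \<delta>"
    and small: "\<And>T. T \<subseteq> {0..1} \<Longrightarrow> diameter T < \<delta> \<Longrightarrow> \<exists>W\<in>\<C>. T \<subseteq> W"
    using Lebesgue_number_lemma[OF compact_Icc] by metis
  obtain N :: nat where N: "0 < N" "inverse (real N) < \<delta>"
    using real_arch_inverse \<delta> by blast
  show thesis
  proof (rule that[OF N(1)])
    fix k
    assume "k < N"
    then have sub: "{real k / N..real (Suc k) / N} \<subseteq> {0..1}"
      using N(1) by (auto simp: divide_le_eq_1)
    have "diameter {real k / N..real (Suc k) / N} = inverse (real N)"
      using N(1) by (simp add: diff_divide_distrib[symmetric] divide_right_mono field_simps)
    then obtain W where "W \<in> \<C>" "{real k / N..real (Suc k) / N} \<subseteq> W"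
      using small[OF sub] N(2) by auto
    then show "\<exists>V\<in>\<V>. p ` {real k / N..real (Suc k) / N} \<subseteq> V"
      unfolding \<C>_def using sub by blast
  qed
qed

lemma cis_2pi_eq_cases:
  fixes t t' :: real
  assumes "t \<in> {0..1}" "t' \<in> {0..1}" "cis (2 * pi * t) = cis (2 * pi * t')"
  shows "t = t' \<or> (t = 0 \<and> t' = 1) \<or> (t = 1 \<and> t' = 0)"
proof -
  have "cis (2 * pi * t - 2 * pi * t') = 1"
    using assms(3) cis_divide[of "2 * pi * t" "2 * pi * t'", symmetric] by simp
  then have "cos (2 * pi * t - 2 * pi * t') = 1"
    by (metis cis.sel(1) one_complex.sel(1))
  then obtain n :: int where "2 * pi * t - 2 * pi * t' = of_int n * 2 * pi"
    using cos_one_2pi_int by blast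
  then have "2 * pi * (t - t' - of_int n) = 0"
    by (simp add: algebra_simps)
  then have "t - t' = of_int n"
    by simp
  moreover have "-1 \<le> t - t'" "t - t' \<le> 1"
    using assms(1,2) by auto
  ultimately have "n = -1 \<or> n = 0 \<or> n = 1"
    by linarith
  with \<open>t - t' = of_int n\<close> assms(1,2) show ?thesis
    by auto
qed

lemma sphere_eq_cis_image: "sphere (0::complex) 1 = (\<lambda>t. cis (2 * pi * t)) ` {0..1}"
proof (intro equalityI subsetI)
  fix z :: complex
  assume "z \<in> sphere 0 1"
  then have "cis (Arg2pi z) = z"
    by (simp add: complex_norm_eq_1_exp cis_conv_exp)
  moreover have "Arg2pi z / (2 * pi) \<in> {0..1}"
    using Arg2pi_ge_0[of z] Arg2pi_lt_2pi[of z] by simp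
  ultimately show "z \<in> (\<lambda>t. cis (2 * pi * t)) ` {0..1}"
    by (intro image_eqI[of _ _ "Arg2pi z / (2 * pi)"]) simp_all
qed auto

lemma quotient_map_cis_interval:
  "quotient_map (top_of_set {0..1::real}) (top_of_set (sphere 0 1)) (\<lambda>t. cis (2 * pi * t))"
proof (rule continuous_imp_quotient_map)
  show "continuous_map (top_of_set {0..1::real}) (top_of_set (sphere 0 1)) (\<lambda>t. cis (2 * pi * t))"
    by (rule continuous_map_into_subtopology)
       (auto simp: continuous_on_cis continuous_on_mult continuous_on_const continuous_on_id)
qed (auto simp: compact_space_subtopology Hausdorff_space_subtopology sphere_eq_cis_image)

lemma continuous_map_circle_from_loop:
  assumes f: "continuous_map (top_of_set {0..1::real}) Y f" and closed: "f 0 = f 1"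
  obtains g where "continuous_map (top_of_set (sphere 0 1)) Y g"
    "\<And>t. t \<in> {0..1} \<Longrightarrow> g (cis (2 * pi * t)) = f t"
proof -
  define e where "e = (\<lambda>t::real. cis (2 * pi * t))"
  define g where "g = (\<lambda>z. f (SOME t. t \<in> {0..1} \<and> e t = z))"
  have g_e: "g (e t) = f t" if t: "t \<in> {0..1}" for t
  proof -
    define t' where "t' = (SOME t'. t' \<in> {0..1} \<and> e t' = e t)"
    have t': "t' \<in> {0..1}" "e t' = e t"
      unfolding t'_def by (rule someI2[of _ t], use t in auto)+
    then have "f t' = f t"
      using cis_2pi_eq_cases[OF t'(1) t] closed unfolding e_def by auto
    then show ?thesis
      unfolding g_def t'_def[symmetric] .
  qed
  have "continuous_map (top_of_set (sphere 0 1)) Y g"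
  proof (rule continuous_compose_quotient_map)
    show "quotient_map (top_of_set {0..1}) (top_of_set (sphere 0 1)) e"
      unfolding e_def by (rule quotient_map_cis_interval)
    show "continuous_map (top_of_set {0..1}) Y (g \<circ> e)"
      using f by (rule continuous_map_eq) (simp add: g_e)
  qed
  then show thesis
    using that g_e unfolding e_def by blast
qed

definition free_normal_form :: "(nat \<Rightarrow> complex) \<Rightarrow> (nat \<Rightarrow> complex)" where
  "free_normal_form p = (\<lambda>i. if i = 0 then complex_of_real (cmod (p 0)) else 1)"

definition vertex_normal_form ::
    "(nat \<Rightarrow> complex) \<times> (nat \<Rightarrow> complex) \<Rightarrow> (nat \<Rightarrow> complex) \<times> (nat \<Rightarrow> complex)" where
  "vertex_normal_form p = ((\<lambda>_. 1), (\<lambda>j. complex_of_real (cmod (snd p j))))"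

lemma continuous_map_norm_coordinate:
  "continuous_map cfun_top euclidean (\<lambda>p. complex_of_real (cmod (p i)))"
proof -
  have "continuous_map cfun_top euclidean (\<lambda>p. p i)"
    unfolding cfun_top_def by (rule continuous_map_product_projection) simp
  moreover have "continuous_map euclidean euclidean (\<lambda>z::complex. complex_of_real (cmod z))"
    by (simp add: continuous_on_of_real continuous_on_norm continuous_on_id)
  ultimately have "continuous_map cfun_top euclidean ((\<lambda>z. complex_of_real (cmod z)) \<circ> (\<lambda>p. p i))"
    by (rule continuous_map_compose)
  then show ?thesis
    by (simp add: o_def)
qed

lemma free_normal_form_in_model:
  assumes "p \<in> free_model m \<Omega>" "1 \<le> m" "0 \<notin> \<Omega>"
    and "\<forall>c z. cmod c = 1 \<longrightarrow> z \<in> \<Omega> \<longrightarrow> c * z \<in> \<Omega>"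
  shows "free_normal_form p \<in> free_model m \<Omega>"
proof -
  have p0: "p 0 \<in> \<Omega>" "p 0 \<noteq> 0"
    using assms(1,3) by (auto simp: free_model_def)
  then have "complex_of_real (cmod (p 0)) \<in> \<Omega>"
    using assms(4)[rule_format, of "complex_of_real (cmod (p 0)) / p 0" "p 0"]
    by (simp add: norm_divide)
  then show ?thesis
    using p0 assms(2) by (simp add: free_model_def free_normal_form_def)
qed

lemma continuous_map_free_normal_form:
  assumes "1 \<le> m" "0 \<notin> \<Omega>" "\<forall>c z. cmod c = 1 \<longrightarrow> z \<in> \<Omega> \<longrightarrow> c * z \<in> \<Omega>"
  shows "continuous_map (subtopology cfun_top (free_model m \<Omega>))
           (subtopology cfun_top (free_model m \<Omega>)) free_normal_form"
proof (rule continuous_map_into_subtopology)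
  show "continuous_map (subtopology cfun_top (free_model m \<Omega>)) cfun_top free_normal_form"
    unfolding continuous_map_cfun_top_iff free_normal_form_def
    using continuous_map_norm_coordinate by (simp add: continuous_map_from_subtopology)
  show "free_normal_form \<in> topspace (subtopology cfun_top (free_model m \<Omega>)) \<rightarrow> free_model m \<Omega>"
    using free_normal_form_in_model[OF _ assms] by auto
qed

lemma free_normal_form_in_orbit:
  assumes "p \<in> free_model m \<Omega>" "1 \<le> m" "0 \<notin> \<Omega>"
  shows "\<exists>\<tau>\<in>torus m. free_normal_form p = tmult \<tau> p"
proof -
  have p: "p 0 \<noteq> 0" "\<And>i. 1 \<le> i \<Longrightarrow> i < m \<Longrightarrow> cmod (p i) = 1"
      "\<And>i. m \<le> i \<Longrightarrow> p i = 1"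
    using assms(1,3) by (auto simp: free_model_def)
  have nonzero: "p i \<noteq> 0" for i
  proof (cases "i = 0")
    case False
    then show ?thesis
      using p(2)[of i] p(3)[of i] by (cases "i < m") auto
  qed (use p in simp)
  define \<tau> where
    "\<tau> = (\<lambda>i. if i = 0 then complex_of_real (cmod (p 0)) / p 0 else inverse (p i))"
  have "\<tau> \<in> torus m"
    unfolding torus_def
  proof (intro CollectI conjI allI impI)
    show "cmod (\<tau> i) = 1" if "i < m" for i
      using p(1) p(2)[of i] that by (cases "i = 0") (simp_all add: \<tau>_def norm_divide norm_inverse)
    show "\<tau> i = 1" if "m \<le> i" for i
      using p(3)[OF that] that assms(2) by (simp add: \<tau>_def)
  qed
  moreover have "free_normal_form p = tmult \<tau> p"
  proof
    fix i
    show "free_normal_form p i = tmult \<tau> p i"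
      using nonzero[of i] by (cases "i = 0") (simp_all add: free_normal_form_def tmult_def \<tau>_def)
  qed
  ultimately show ?thesis
    by blast
qed

lemma free_normal_form_invariant:
  assumes "\<tau> \<in> torus m" "1 \<le> m"
  shows "free_normal_form (tmult \<tau> p) = free_normal_form p"
proof -
  have "cmod (\<tau> 0) = 1"
    using assms by (simp add: torus_def)
  then show ?thesis
    by (intro ext) (simp add: free_normal_form_def tmult_def norm_mult)
qed

lemma vertex_normal_form_in_model:
  assumes "p \<in> vertex_model m k"
  shows "vertex_normal_form p \<in> vertex_model m k"
proof -
  obtain u w where p: "p = (u, w)"
    by fastforce
  have w: "\<forall>j\<ge>k. w j = 0" "\<forall>j. cmod (w j) < 1"
    and unique: "\<forall>j j'. w j \<noteq> 0 \<and> w j' \<noteq> 0 \<longrightarrow> j = j'"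
    using assms by (simp_all add: vertex_model_def p)
  \<comment> \<open>as an equivalence, so that simp never uses \<open>unique\<close> as a (looping) rewrite rule\<close>
  from w have "?thesis \<longleftrightarrow> (\<forall>j j'. w j \<noteq> 0 \<and> w j' \<noteq> 0 \<longrightarrow> j = j')"
    by (simp add: vertex_model_def vertex_normal_form_def p)
  with unique show ?thesis
    by blast
qed

lemma continuous_map_vertex_normal_form:
  "continuous_map (subtopology (prod_topology cfun_top cfun_top) (vertex_model m k))
     (subtopology (prod_topology cfun_top cfun_top) (vertex_model m k)) vertex_normal_form"
proof (rule continuous_map_into_subtopology)
  let ?Z = "subtopology (prod_topology cfun_top cfun_top) (vertex_model m k)"
  have "continuous_map (prod_topology cfun_top cfun_top) euclidean
          (\<lambda>p. complex_of_real (cmod (snd p j)))" for j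
    using continuous_map_compose[OF continuous_map_snd continuous_map_norm_coordinate]
    by (simp add: o_def)
  then have "continuous_map ?Z cfun_top (\<lambda>p. \<lambda>j. complex_of_real (cmod (snd p j)))"
    unfolding continuous_map_cfun_top_iff by (simp add: continuous_map_from_subtopology)
  then show "continuous_map ?Z (prod_topology cfun_top cfun_top) vertex_normal_form"
    unfolding vertex_normal_form_def[abs_def] continuous_map_paired
    by (simp only: continuous_map_const topspace_cfun_top UNIV_I simp_thms)
  show "vertex_normal_form \<in> topspace ?Z \<rightarrow> vertex_model m k"
    using vertex_normal_form_in_model by (simp add: Pi_iff)
qed

lemma vertex_normal_form_in_orbit:
  assumes "p \<in> vertex_model m k" "1 \<le> m"
  shows "\<exists>\<tau>\<in>torus m. vertex_normal_form p = vertex_act \<tau> p"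
proof -
  obtain u w where p: "p = (u, w)"
    by fastforce
  have u: "\<And>i. 1 \<le> i \<Longrightarrow> i < m \<Longrightarrow> cmod (u i) = 1"
      "\<And>i. m \<le> i \<Longrightarrow> u i = 1"
    and unique: "\<forall>j j'. w j \<noteq> 0 \<and> w j' \<noteq> 0 \<longrightarrow> j = j'"
    using assms(1) by (simp_all add: vertex_model_def p)
  have u_nonzero: "u i \<noteq> 0" if "i \<noteq> 0" for i
    using u(1)[of i] u(2)[of i] that by (cases "i < m") auto
  obtain c where c: "cmod c = 1" "\<And>j. c * w j = complex_of_real (cmod (w j))"
  proof (cases "\<exists>j. w j \<noteq> 0")
    case True
    then obtain j0 where j0: "w j0 \<noteq> 0"
      by blast
    show ?thesis
    proof (rule that)
      show "cmod (complex_of_real (cmod (w j0)) / w j0) = 1"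
        using j0 by (simp add: norm_divide)
      show "complex_of_real (cmod (w j0)) / w j0 * w j = complex_of_real (cmod (w j))" for j
      proof (cases "w j = 0")
        case False
        then have "j = j0"
          using unique[rule_format, of j j0] j0 by blast
        with j0 show ?thesis
          by simp
      qed simp
    qed
  next
    case False
    then show ?thesis
      by (intro that[of 1]) auto
  qed
  define \<tau> where "\<tau> = (\<lambda>i. if i = 0 then c else inverse (u i))"
  have "\<tau> \<in> torus m"
    unfolding torus_def
  proof (intro CollectI conjI allI impI)
    show "cmod (\<tau> i) = 1" if "i < m" for i
      using c(1) u(1)[of i] that by (cases "i = 0") (simp_all add: \<tau>_def norm_inverse)
    show "\<tau> i = 1" if "m \<le> i" for i
      using u(2)[OF that] that assms(2) by (simp add: \<tau>_def)
  qed
  moreover have "vertex_normal_form p = vertex_act \<tau> p"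
    using c(2) u_nonzero
    by (simp add: vertex_normal_form_def vertex_act_def p \<tau>_def fun_eq_iff)
  ultimately show ?thesis
    by blast
qed

lemma vertex_normal_form_invariant:
  assumes "\<tau> \<in> torus m" "1 \<le> m"
  shows "vertex_normal_form (vertex_act \<tau> p) = vertex_normal_form p"
proof -
  have "cmod (\<tau> 0) = 1"
    using assms by (simp add: torus_def)
  then have "cmod (\<tau> 0 * snd p j) = cmod (snd p j)" for j
    by (simp add: norm_mult)
  then show ?thesis
    unfolding vertex_normal_form_def vertex_act_def snd_conv by (simp only:)
qed

definition local_section ::
    "'a topology \<Rightarrow> 'b topology \<Rightarrow> ('a \<Rightarrow> 'b) \<Rightarrow> 'b set \<Rightarrow> ('b \<Rightarrow> 'a) \<Rightarrow> bool" where
  "local_section X Q \<pi> V s \<longleftrightarrow>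
     openin Q V \<and> continuous_map (subtopology Q V) X s \<and> (\<forall>q\<in>V. \<pi> (s q) = q)"

locale torus_orbit_map =
  fixes m :: nat and X :: "'a topology" and act :: "(nat \<Rightarrow> complex) \<Rightarrow> 'a \<Rightarrow> 'a"
    and Q :: "'b topology" and \<pi> :: "'a \<Rightarrow> 'b"
  assumes quotient: "quotient_map X Q \<pi>"
    and orbits: "\<forall>x\<in>topspace X. \<forall>y\<in>topspace X. \<pi> x = \<pi> y \<longleftrightarrow> (\<exists>t\<in>torus m. act t x = y)"
begin

lemma same_orbitD:
  assumes "x \<in> topspace X" "y \<in> topspace X" "\<pi> x = \<pi> y"
  obtains t where "t \<in> torus m" "act t x = y"
  using orbits assms by blast

lemma same_orbitI:
  assumes "x \<in> topspace X" "act t x \<in> topspace X" "t \<in> torus m"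
  shows "\<pi> (act t x) = \<pi> x"
  using orbits assms by metis

lemma saturated_invariant:
  assumes "U \<subseteq> topspace X" and invariant: "\<forall>t\<in>torus m. \<forall>y\<in>U. act t y \<in> U"
  shows "{y \<in> topspace X. \<pi> y \<in> \<pi> ` U} = U"
proof (intro equalityI subsetI)
  fix y
  assume "y \<in> {y \<in> topspace X. \<pi> y \<in> \<pi> ` U}"
  then obtain u where "y \<in> topspace X" "u \<in> U" "\<pi> u = \<pi> y"
    by auto
  moreover from this obtain t where "t \<in> torus m" "act t u = y"
    using assms(1) same_orbitD by blast
  ultimately show "y \<in> U"
    using invariant by blast
qed (use assms(1) in blast)

lemma local_section_from_chart:
  fixes Y :: "'c topology"
  assumes U: "openin X U" and invariant: "\<forall>t\<in>torus m. \<forall>y\<in>U. act t y \<in> U"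
    and \<phi>: "torus_aut m \<phi>"
    and h: "homeomorphic_map (subtopology X U) (subtopology Y M) h"
    and equivariant: "\<forall>t\<in>torus m. \<forall>y\<in>U. h (act t y) = A (\<phi> t) (h y)"
    and N: "continuous_map (subtopology Y M) (subtopology Y M) N"
    and N_orbit: "\<forall>p\<in>M. \<exists>\<tau>\<in>torus m. N p = A \<tau> p"
    and N_invariant: "\<forall>p\<in>M. \<forall>\<tau>\<in>torus m. N (A \<tau> p) = N p"
  shows "\<exists>s. local_section X Q \<pi> (\<pi> ` U) s"
proof -
  have UX: "U \<subseteq> topspace X"
    using U openin_subset by blast
  have saturated: "{y \<in> topspace X. \<pi> y \<in> \<pi> ` U} = U"
    using saturated_invariant[OF UX invariant] .
  have open_image: "openin Q (\<pi> ` U)"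
    using quotient U saturated unfolding quotient_map_saturated_open by blast
  obtain g where hg: "homeomorphic_maps (subtopology X U) (subtopology Y M) h g"
    using h homeomorphic_map_maps by blast
  have h_cont: "continuous_map (subtopology X U) (subtopology Y M) h"
    and g_cont: "continuous_map (subtopology Y M) (subtopology X U) g"
    and g_h: "\<And>y. y \<in> U \<Longrightarrow> g (h y) = y"
    using hg UX unfolding homeomorphic_maps_def by auto
  have h_M: "h y \<in> M" if "y \<in> U" for y
    using continuous_map_image_subset_topspace[OF h_cont] that UX by auto
  \<comment> \<open>independent of the choice of representative, since \<open>N\<close> is constant on orbits\<close>
  define s where "s = (\<lambda>q. g (N (h (SOME y. y \<in> U \<and> \<pi> y = q))))"
  have s_\<pi>: "s (\<pi> y) = g (N (h y))" if "y \<in> U" for y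
  proof -
    define y' where "y' = (SOME y'. y' \<in> U \<and> \<pi> y' = \<pi> y)"
    have y': "y' \<in> U" "\<pi> y' = \<pi> y"
      unfolding y'_def by (rule someI2[of _ y], use that in auto)+
    moreover have "y \<in> topspace X" "y' \<in> topspace X"
      using that y'(1) UX by auto
    ultimately obtain t where t: "t \<in> torus m" "act t y = y'"
      using same_orbitD by metis
    have "\<phi> t \<in> torus m"
      using torus_aut_image[OF \<phi>] t(1) by blast
    then have "N (h y') = N (h y)"
      using t equivariant N_invariant h_M that by metis
    then show ?thesis
      unfolding s_def y'_def[symmetric] by simp
  qed
  have "continuous_map (subtopology Q (\<pi> ` U)) X s"
  proof (rule continuous_compose_quotient_map)
    show "quotient_map (subtopology X U) (subtopology Q (\<pi> ` U)) \<pi>"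
      using quotient_map_restriction[OF quotient saturated] open_image by blast
    have "continuous_map (subtopology X U) X (g \<circ> N \<circ> h)"
      using continuous_map_compose[OF continuous_map_compose[OF h_cont N] g_cont]
      by (simp add: o_assoc continuous_map_into_fulltopology)
    then show "continuous_map (subtopology X U) X (s \<circ> \<pi>)"
      by (rule continuous_map_eq) (use UX s_\<pi> in auto)
  qed
  moreover have "\<pi> (s q) = q" if q: "q \<in> \<pi> ` U" for q
  proof -
    obtain y where y: "y \<in> U" "q = \<pi> y"
      using q by blast
    obtain \<tau> where \<tau>: "\<tau> \<in> torus m" "N (h y) = A \<tau> (h y)"
      using N_orbit h_M y(1) by blast
    then obtain t where t: "t \<in> torus m" "\<phi> t = \<tau>"
      using torus_aut_image[OF \<phi>] by (metis imageE)
    have "s q = g (N (h y))"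
      using s_\<pi> y by simp
    also have "\<dots> = g (h (act t y))"
      using \<tau>(2) t equivariant y(1) by simp
    also have "\<dots> = act t y"
      using g_h invariant t(1) y(1) by simp
    finally have "s q = act t y" .
    moreover have "act t y \<in> topspace X" "y \<in> topspace X"
      using invariant t(1) y(1) UX by blast+
    ultimately show ?thesis
      using same_orbitI t(1) y(2) by simp
  qed
  ultimately show ?thesis
    unfolding local_section_def using open_image by blast
qed

end

locale loc_std_orbit_map = torus_orbit_map +
  assumes loc_std: "loc_std_over_graph m X act"
begin

lemma exists_local_section:
  assumes "x \<in> topspace X"
  shows "\<exists>V s. \<pi> x \<in> V \<and> local_section X Q \<pi> V s"
proof -
  have m: "1 \<le> m"
    using loc_std by (simp add: loc_std_over_graph_def)
  have "free_chart m X act x \<or> vertex_chart m X act x"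
    using loc_std assms by (simp add: loc_std_over_graph_def)
  then obtain U where "x \<in> U" "\<exists>s. local_section X Q \<pi> (\<pi> ` U) s"
  proof
    assume "free_chart m X act x"
    then obtain U \<Omega> h \<phi>
      where chart: "openin X U" "x \<in> U" "\<forall>t\<in>torus m. \<forall>y\<in>U. act t y \<in> U"
        "0 \<notin> \<Omega>" "\<forall>c z. cmod c = 1 \<longrightarrow> z \<in> \<Omega> \<longrightarrow> c * z \<in> \<Omega>"
        "torus_aut m \<phi>"
        "homeomorphic_map (subtopology X U) (subtopology cfun_top (free_model m \<Omega>)) h"
        "\<forall>t\<in>torus m. \<forall>y\<in>U. h (act t y) = tmult (\<phi> t) (h y)"
      unfolding free_chart_def by blast
    show thesis
    proof (rule that[OF chart(2)], rule local_section_from_chart[OF chart(1,3,6,7,8)])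
      show "continuous_map (subtopology cfun_top (free_model m \<Omega>))
              (subtopology cfun_top (free_model m \<Omega>)) free_normal_form"
        using continuous_map_free_normal_form[OF m chart(4,5)] .
      show "\<forall>p\<in>free_model m \<Omega>. \<exists>\<tau>\<in>torus m. free_normal_form p = tmult \<tau> p"
        using free_normal_form_in_orbit[OF _ m chart(4)] by blast
      show "\<forall>p\<in>free_model m \<Omega>. \<forall>\<tau>\<in>torus m. free_normal_form (tmult \<tau> p) = free_normal_form p"
        using free_normal_form_invariant[OF _ m] by blast
    qed
  next
    assume "vertex_chart m X act x"
    then obtain U k h \<phi>
      where chart: "openin X U" "x \<in> U" "\<forall>t\<in>torus m. \<forall>y\<in>U. act t y \<in> U"
        "torus_aut m \<phi>"
        "homeomorphic_map (subtopology X U)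
           (subtopology (prod_topology cfun_top cfun_top) (vertex_model m k)) h"
        "\<forall>t\<in>torus m. \<forall>y\<in>U. h (act t y) = vertex_act (\<phi> t) (h y)"
      unfolding vertex_chart_def by blast
    show thesis
    proof (rule that[OF chart(2)], rule local_section_from_chart[OF chart(1,3-6)])
      show "continuous_map (subtopology (prod_topology cfun_top cfun_top) (vertex_model m k))
              (subtopology (prod_topology cfun_top cfun_top) (vertex_model m k)) vertex_normal_form"
        using continuous_map_vertex_normal_form .
      show "\<forall>p\<in>vertex_model m k. \<exists>\<tau>\<in>torus m. vertex_normal_form p = vertex_act \<tau> p"
        using vertex_normal_form_in_orbit[OF _ m] by blast
      show "\<forall>p\<in>vertex_model m k. \<forall>\<tau>\<in>torus m. vertex_normal_form (vertex_act \<tau> p) = vertex_normal_form p"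
        using vertex_normal_form_invariant[OF _ m] by blast
    qed
  qed
  then show ?thesis
    by blast
qed

lemma continuous_map_act:
  assumes "continuous_map Z (torus_top m) \<gamma>" "continuous_map Z X \<sigma>"
  shows "continuous_map Z X (\<lambda>z. act (\<gamma> z) (\<sigma> z))"
proof -
  have "continuous_map (prod_topology (torus_top m) X) X (\<lambda>(t, x). act t x)"
    using loc_std by (simp add: loc_std_over_graph_def)
  from continuous_map_compose[OF continuous_map_pairedI[OF assms] this] show ?thesis
    by (simp add: o_def)
qed

lemma path_lift_extend:
  fixes a b :: real
  assumes \<sigma>: "continuous_map (top_of_set {0..a}) X \<sigma>" "\<forall>t\<in>{0..a}. \<pi> (\<sigma> t) = p t"
    and p: "continuous_map (top_of_set {a..b}) Q p"
    and s: "local_section X Q \<pi> V s" "p ` {a..b} \<subseteq> V"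
    and ab: "0 \<le> a" "a \<le> b"
  shows "\<exists>\<sigma>'. continuous_map (top_of_set {0..b}) X \<sigma>' \<and> (\<forall>t\<in>{0..b}. \<pi> (\<sigma>' t) = p t)"
proof -
  have s_cont: "continuous_map (subtopology Q V) X s" and s_section: "\<forall>q\<in>V. \<pi> (s q) = q"
    using s(1) unfolding local_section_def by auto
  have in_V: "p t \<in> V" if "t \<in> {a..b}" for t
    using s(2) that by blast
  have p_V: "continuous_map (top_of_set {a..b}) (subtopology Q V) p"
    using p s(2) by (auto simp: continuous_map_in_subtopology)
  have lift: "continuous_map (top_of_set {a..b}) X (s \<circ> p)"
    using continuous_map_compose[OF p_V s_cont] .
  have "s (p a) \<in> topspace X" "\<sigma> a \<in> topspace X"
    using continuous_map_image_subset_topspace[OF lift]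
      continuous_map_image_subset_topspace[OF \<sigma>(1)] ab
    by (auto simp: image_subset_iff)
  moreover have "\<pi> (s (p a)) = \<pi> (\<sigma> a)"
    using s_section in_V \<sigma>(2) ab by auto
  ultimately obtain g where g: "g \<in> torus m" "act g (s (p a)) = \<sigma> a"
    by (rule same_orbitD)
  have translate: "continuous_map (top_of_set {a..b}) X (\<lambda>t. act g (s (p t)))"
    using continuous_map_act[OF continuous_map_const[THEN iffD2] lift, of g] g(1) by (simp add: o_def)
  show ?thesis
  proof (intro exI conjI ballI)
    show "continuous_map (top_of_set {0..b}) X (\<lambda>t. if t \<le> a then \<sigma> t else act g (s (p t)))"
      using continuous_map_glue_intervals[OF \<sigma>(1) translate] g(2) ab by simp
    fix t :: real
    assume t: "t \<in> {0..b}"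
    show "\<pi> (if t \<le> a then \<sigma> t else act g (s (p t))) = p t"
    proof (cases "t \<le> a")
      case False
      with t have "t \<in> {a..b}"
        by simp
      moreover have "act g (s (p t)) \<in> topspace X" "s (p t) \<in> topspace X"
        using continuous_map_image_subset_topspace[OF translate]
          continuous_map_image_subset_topspace[OF lift] calculation by (auto simp: image_subset_iff)
      ultimately show ?thesis
        using False same_orbitI g(1) s_section in_V by auto
    qed (use \<sigma>(2) t in simp)
  qed
qed

lemma path_lift:
  assumes p: "continuous_map (top_of_set {0..1::real}) Q p"
  obtains \<sigma> where "continuous_map (top_of_set {0..1}) X \<sigma>" "\<forall>t\<in>{0..1}. \<pi> (\<sigma> t) = p t"
proof -
  have p_Q: "p t \<in> topspace Q" if "t \<in> {0..1}" for t
    using continuous_map_image_subset_topspace[OF p] that by auto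
  have surj: "\<pi> ` topspace X = topspace Q"
    using quotient quotient_imp_surjective_map by blast
  have "\<exists>V\<in>{V. \<exists>s. local_section X Q \<pi> V s}. openin Q V \<and> p t \<in> V" if t: "t \<in> {0..1}" for t
  proof -
    obtain x where "x \<in> topspace X" "\<pi> x = p t"
      using p_Q[OF t] surj by (metis imageE)
    then show ?thesis
      using exists_local_section unfolding local_section_def by fastforce
  qed
  then obtain N :: nat where N: "0 < N"
    and fine: "\<And>k. k < N \<Longrightarrow>
      \<exists>V\<in>{V. \<exists>s. local_section X Q \<pi> V s}. p ` {real k / N..real (Suc k) / N} \<subseteq> V"
    using interval_subdivision_subordinate[OF p] by blast
  have "k \<le> N \<Longrightarrow> \<exists>\<sigma>. continuous_map (top_of_set {0..real k / N}) X \<sigma> \<and>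
          (\<forall>t\<in>{0..real k / N}. \<pi> (\<sigma> t) = p t)" for k
  proof (induction k)
    case 0
    obtain x where "x \<in> topspace X" "\<pi> x = p 0"
      using p_Q[of 0] surj by (metis atLeastAtMost_iff imageE order_refl zero_le_one)
    then show ?case
      by (intro exI[of _ "\<lambda>_. x"]) auto
  next
    case (Suc k)
    have sub: "{real k / N..real (Suc k) / N} \<subseteq> {0..1}"
      "0 \<le> real k / N" "real k / N \<le> real (Suc k) / N"
      using Suc.prems N by (auto simp: divide_le_eq_1 divide_right_mono)
    obtain V s where "local_section X Q \<pi> V s" "p ` {real k / N..real (Suc k) / N} \<subseteq> V"
      using fine[of k] Suc.prems by auto
    moreover obtain \<sigma> where "continuous_map (top_of_set {0..real k / N}) X \<sigma>"
        "\<forall>t\<in>{0..real k / N}. \<pi> (\<sigma> t) = p t"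
      using Suc by auto
    moreover have "continuous_map (top_of_set {real k / N..real (Suc k) / N}) Q p"
      using p sub(1) by (metis continuous_map_from_subtopology subtopology_subtopology Int_absorb1)
    ultimately show ?case
      using path_lift_extend sub(2,3) by blast
  qed
  from this[of N] that show thesis
    using N by auto
qed

lemma closed_path_lift:
  assumes p: "continuous_map (top_of_set {0..1::real}) Q p" and closed: "p 0 = p 1"
  obtains \<sigma> where "continuous_map (top_of_set {0..1}) X \<sigma>" "\<forall>t\<in>{0..1}. \<pi> (\<sigma> t) = p t"
    "\<sigma> 0 = \<sigma> 1"
proof -
  obtain \<sigma> where \<sigma>: "continuous_map (top_of_set {0..1}) X \<sigma>" "\<forall>t\<in>{0..1}. \<pi> (\<sigma> t) = p t"
    using path_lift[OF p] by blast
  have \<sigma>_X: "\<sigma> t \<in> topspace X" if "t \<in> {0..1}" for t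
    using continuous_map_image_subset_topspace[OF \<sigma>(1)] that by auto
  obtain h where h: "h \<in> torus m" "act h (\<sigma> 0) = \<sigma> 1"
    using same_orbitD[OF \<sigma>_X \<sigma>_X] \<sigma>(2) closed
    by (metis atLeastAtMost_iff order_refl zero_le_one)
  obtain \<gamma> where \<gamma>: "continuous_map (top_of_set {0..1::real}) (torus_top m) \<gamma>"
      "\<gamma> 0 = tone" "\<gamma> 1 = (\<lambda>i. inverse (h i))"
    using torus_path_from_tone[OF torus_inverse(1)[OF h(1)]] by blast
  define \<sigma>' where "\<sigma>' = (\<lambda>t. act (\<gamma> t) (\<sigma> t))"
  have \<sigma>'_cont: "continuous_map (top_of_set {0..1}) X \<sigma>'"
    unfolding \<sigma>'_def using continuous_map_act[OF \<gamma>(1) \<sigma>(1)] .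
  moreover have "\<forall>t\<in>{0..1}. \<pi> (\<sigma>' t) = p t"
  proof
    fix t :: real
    assume t: "t \<in> {0..1}"
    have "\<gamma> t \<in> torus m"
      using continuous_map_image_subset_topspace[OF \<gamma>(1)] t by auto
    moreover have "\<sigma>' t \<in> topspace X"
      using continuous_map_image_subset_topspace[OF \<sigma>'_cont] t by auto
    ultimately show "\<pi> (\<sigma>' t) = p t"
      using same_orbitI[OF \<sigma>_X[OF t]] \<sigma>(2) t unfolding \<sigma>'_def by auto
  qed
  moreover have "\<sigma>' 0 = \<sigma>' 1"
  proof -
    have act_tone: "act tone x = x" if "x \<in> topspace X" for x
      using loc_std that by (simp add: loc_std_over_graph_def)
    have act_tmult: "act (tmult s t) x = act s (act t x)"
      if "x \<in> topspace X" "s \<in> torus m" "t \<in> torus m" for x s t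
      using loc_std that by (simp add: loc_std_over_graph_def)
    have "\<sigma>' 1 = act (\<lambda>i. inverse (h i)) (act h (\<sigma> 0))"
      using h(2) \<gamma>(3) by (simp add: \<sigma>'_def)
    also have "\<dots> = \<sigma> 0"
      using act_tmult[symmetric] act_tone torus_inverse[OF h(1)] h(1) \<sigma>_X[of 0] by simp
    also have "\<dots> = \<sigma>' 0"
      using act_tone \<gamma>(2) \<sigma>_X[of 0] by (simp add: \<sigma>'_def)
    finally show ?thesis
      by simp
  qed
  ultimately show thesis
    by (rule that)
qed

lemma exists_section_over_circle:
  assumes "Q homeomorphic_space top_of_set (sphere (0::complex) 1)"
  shows "\<exists>s. continuous_map Q X s \<and> (\<forall>q\<in>topspace Q. \<pi> (s q) = q)"
proof -
  obtain f g where fg: "homeomorphic_maps Q (top_of_set (sphere (0::complex) 1)) f g"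
    using assms homeomorphic_space_def by blast
  have f: "continuous_map Q (top_of_set (sphere 0 1)) f"
    and g: "continuous_map (top_of_set (sphere 0 1)) Q g"
    and g_f: "\<And>q. q \<in> topspace Q \<Longrightarrow> g (f q) = q"
    using fg unfolding homeomorphic_maps_def by auto
  define p where "p = (\<lambda>t::real. g (cis (2 * pi * t)))"
  have "continuous_map (top_of_set {0..1}) Q p"
    using continuous_map_compose[OF quotient_imp_continuous_map[OF quotient_map_cis_interval] g]
    by (simp add: p_def o_def)
  moreover have "p 0 = p 1"
    by (simp add: p_def)
  ultimately obtain \<sigma> where \<sigma>: "continuous_map (top_of_set {0..1}) X \<sigma>"
      "\<forall>t\<in>{0..1}. \<pi> (\<sigma> t) = p t" "\<sigma> 0 = \<sigma> 1"
    by (rule closed_path_lift)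
  obtain \<tau> where \<tau>: "continuous_map (top_of_set (sphere 0 1)) X \<tau>"
      "\<And>t. t \<in> {0..1} \<Longrightarrow> \<tau> (cis (2 * pi * t)) = \<sigma> t"
    using continuous_map_circle_from_loop[OF \<sigma>(1,3)] by blast
  show ?thesis
  proof (intro exI conjI ballI)
    show "continuous_map Q X (\<tau> \<circ> f)"
      using continuous_map_compose[OF f \<tau>(1)] .
    fix q
    assume q: "q \<in> topspace Q"
    then have "f q \<in> sphere 0 1"
      using continuous_map_image_subset_topspace[OF f] by auto
    then obtain t where t: "t \<in> {0..1}" "f q = cis (2 * pi * t)"
      unfolding sphere_eq_cis_image by blast
    then show "\<pi> ((\<tau> \<circ> f) q) = q"
      using \<sigma>(2) \<tau>(2) t g_f[OF q] unfolding p_def by simp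
  qed
qed


end

theorem mainTheorem2:
  fixes X :: "'a topology" and act :: "(nat \<Rightarrow> complex) \<Rightarrow> 'a \<Rightarrow> 'a" and m :: nat
    and Q :: "'b topology" and \<pi> :: "'a \<Rightarrow> 'b"
  assumes "loc_std_over_graph m X act"
    and "quotient_map X Q \<pi>"
    and "\<forall>x\<in>topspace X. \<forall>y\<in>topspace X. \<pi> x = \<pi> y \<longleftrightarrow> (\<exists>t\<in>torus m. act t x = y)"
    and "Q homeomorphic_space (subtopology euclidean (sphere (0::complex) 1))"
    and "\<exists>v. \<pi> ` {x \<in> topspace X. isotropy m act x \<noteq> {tone}} = {v}"
  shows "\<exists>s. continuous_map Q X s \<and> (\<forall>q\<in>topspace Q. \<pi> (s q) = q)"
proof -
  interpret loc_std_orbit_map m X act Q \<pi>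
    using assms(1-3) by unfold_locales
  show ?thesis
    using assms(4) by (rule exists_section_over_circle)
qed

end
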